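(* Let $L>0$, $\mathbb{T}=\mathbb{R}/L\mathbb{Z}$, let $(\gamma_k)_{k\in\mathbb{Z}}$ be positive reals, and let $u$ be the solution of the linear equation \[ u_t-u_{txx}+u_x+\mathscr{L}_\gamma(u)=0,\quad x\in\mathbb{T},\qquad u(0)=u_0. \] Assume there exist positive constants $\alpha,\beta,C$ such that (i) $|\hat{u}_{0,k}|^2\le C\gamma_k^{2\delta}$ for all $k$, where $\delta=\alpha+\beta$; (ii) $\sum_{k\in\mathbb{Z}}(1+k^2)^{2\alpha+1}\gamma_k^{2\beta}<+\infty$. Then for all $t>0$, \[ |u(t)|_{H^1}^2\le Ce^{-2\alpha}\Big(\frac{\alpha}{t}\Big)^{2\alpha}\sum_{k\in\mathbb{Z}}(1+k^2)^{2\alpha+1}\gamma_k^{2\beta}=O\Big(\frac{1}{t^{2\alpha}}\Big). \]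
   Context: For $u\in L^2(\mathbb{T})$, $\hat u_k$ is its $k$-th Fourier coefficient and $\hat u_{0,k}$ those of $u_0$; in symbols $k$ stands for the frequency $2\pi k/L$. $\mathscr{L}_\gamma$ is the Fourier multiplier $\widehat{\mathscr{L}_\gamma(u)}_k=\gamma_k\hat u_k$. The $H^1$ norm is $|u|_{H^1}^2=\sum_k(1+k^2)|\hat u_k|^2$. The solution is given by $\hat u_k(t)=e^{-\frac{\gamma_k+ik}{1+k^2}t}\hat u_k(0)$. *)

theory Defs
  imports "HOL-Analysis.Analysis"
begin

text \<open>Functions in L^2 of the torus R/LZ are represented by their Fourier
coefficient sequences (int => complex), square summable (Riesz-Fischer).
The symbol k in formulas stands for the frequency 2 pi k / L.\<close>

definition freq :: "real \<Rightarrow> int \<Rightarrow> real" where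
  "freq L k = 2 * pi * real_of_int k / L"

text \<open>Fourier coefficients of the solution u(t) of
  u_t - u_txx + u_x + L_gamma(u) = 0, u(0) = u0, with hat u0 = c.\<close>
definition sol_coeff :: "real \<Rightarrow> (int \<Rightarrow> real) \<Rightarrow> (int \<Rightarrow> complex) \<Rightarrow> real \<Rightarrow> int \<Rightarrow> complex" where
  "sol_coeff L \<gamma> c t k =
     exp (- ((complex_of_real (\<gamma> k) + \<i> * complex_of_real (freq L k))
             / complex_of_real (1 + (freq L k)\<^sup>2)) * complex_of_real t) * c k"

definition H1_norm_sq :: "real \<Rightarrow> (int \<Rightarrow> complex) \<Rightarrow> real" where
  "H1_norm_sq L v = (\<Sum>\<^sub>\<infinity>k. (1 + (freq L k)\<^sup>2) * (cmod (v k))\<^sup>2)"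

end

theory Submission
  imports Defs
begin

text \<open>The k-th mode decays like \<open>exp (-\<gamma>\<^sub>k t / (1 + k\<^sup>2))\<close>. The elementary bound
  \<open>x\<^sup>a e\<^sup>-\<^sup>x \<le> (a/e)\<^sup>a\<close>, applied with \<open>x = 2 \<gamma>\<^sub>k t / (1 + k\<^sup>2)\<close> and \<open>a = 2\<alpha>\<close>, trades this decay
  for the factor \<open>\<gamma>\<^sub>k\<^sup>2\<^sup>\<alpha>\<close> against \<open>e\<^sup>-\<^sup>2\<^sup>\<alpha> (\<alpha>/t)\<^sup>2\<^sup>\<alpha> (1 + k\<^sup>2)\<^sup>2\<^sup>\<alpha>\<close>. Hypothesis (i) provides
  the factor \<open>\<gamma>\<^sub>k\<^sup>2\<^sup>\<alpha>\<close> and hypothesis (ii) makes the remaining series summable.\<close>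

lemma powr_mult_exp_neg_le:
  fixes x a :: real
  assumes "x > 0" "a > 0"
  shows "x powr a * exp (- x) \<le> exp (- a) * a powr a"
proof -
  have "ln (x / a) \<le> x / a - 1"
    using assms by (intro ln_le_minus_one) simp
  then have "a * ln x - x \<le> a * ln a - a"
    using assms by (simp add: ln_div field_simps)
  then have "exp (a * ln x - x) \<le> exp (a * ln a - a)"
    by simp
  moreover have "exp (a * ln x - x) = x powr a * exp (- x)"
    using assms by (simp add: powr_def exp_diff divide_inverse exp_minus)
  moreover have "exp (a * ln a - a) = exp (- a) * a powr a"
    using assms by (simp add: powr_def exp_diff divide_inverse exp_minus)
  ultimately show ?thesis by simp
qed

lemma exp_decay_mult_powr_le:
  fixes w g t \<alpha> :: real
  assumes w: "w > 0" and g: "g > 0" and t: "t > 0" and \<alpha>: "\<alpha> > 0"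
  shows "exp (- 2 * g * t / w) * g powr (2 * \<alpha>)
           \<le> exp (- 2 * \<alpha>) * (\<alpha> / t) powr (2 * \<alpha>) * w powr (2 * \<alpha>)"
proof -
  define x where "x = 2 * g * t / w"
  have x: "x > 0" using w g t by (simp add: x_def)
  have "g = x * (w / (2 * t))" using w t by (simp add: x_def)
  then have "g powr (2 * \<alpha>) = x powr (2 * \<alpha>) * (w / (2 * t)) powr (2 * \<alpha>)"
    using x w t by (simp only: powr_mult)
  moreover have "- 2 * g * t / w = - x" by (simp add: x_def)
  ultimately have "exp (- 2 * g * t / w) * g powr (2 * \<alpha>)
          = (x powr (2 * \<alpha>) * exp (- x)) * (w / (2 * t)) powr (2 * \<alpha>)"
    by simp
  also have "\<dots> \<le> (exp (- (2 * \<alpha>)) * (2 * \<alpha>) powr (2 * \<alpha>)) * (w / (2 * t)) powr (2 * \<alpha>)"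
    using x \<alpha> by (intro mult_right_mono powr_mult_exp_neg_le) auto
  also have "\<dots> = exp (- 2 * \<alpha>) * (\<alpha> / t) powr (2 * \<alpha>) * w powr (2 * \<alpha>)"
  proof -
    have "2 * \<alpha> * (w / (2 * t)) = \<alpha> / t * w" using t by simp
    then show ?thesis
      using w t \<alpha> by (simp add: mult.assoc powr_mult[symmetric])
  qed
  finally show ?thesis .
qed

lemma cmod_sol_coeff_sq:
  "(cmod (sol_coeff L \<gamma> c t k))\<^sup>2 = exp (- 2 * \<gamma> k * t / (1 + (freq L k)\<^sup>2)) * (cmod (c k))\<^sup>2"
proof -
  have "Re (- ((complex_of_real (\<gamma> k) + \<i> * complex_of_real (freq L k))
               / complex_of_real (1 + (freq L k)\<^sup>2)) * complex_of_real t)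
        = - \<gamma> k * t / (1 + (freq L k)\<^sup>2)"
    by (simp add: Re_divide_of_real)
  then show ?thesis
    unfolding sol_coeff_def norm_mult norm_exp_eq_Re power_mult_distrib
    by (simp add: power2_eq_square exp_add[symmetric])
qed

lemma H1_weight_sol_coeff_le:
  assumes \<gamma>: "\<gamma> k > 0" and t: "t > 0" and \<alpha>: "\<alpha> > 0" and C: "C > 0"
    and c: "(cmod (c k))\<^sup>2 \<le> C * \<gamma> k powr (2 * (\<alpha> + \<beta>))"
  shows "(1 + (freq L k)\<^sup>2) * (cmod (sol_coeff L \<gamma> c t k))\<^sup>2
           \<le> C * exp (- 2 * \<alpha>) * (\<alpha> / t) powr (2 * \<alpha>)
              * ((1 + (freq L k)\<^sup>2) powr (2 * \<alpha> + 1) * \<gamma> k powr (2 * \<beta>))"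
proof -
  define w where "w = 1 + (freq L k)\<^sup>2"
  define E where "E = exp (- 2 * \<gamma> k * t / w)"
  have w: "w > 0" by (simp add: w_def add_pos_nonneg)
  have "w * (cmod (sol_coeff L \<gamma> c t k))\<^sup>2 = w * E * (cmod (c k))\<^sup>2"
    by (simp add: cmod_sol_coeff_sq w_def E_def)
  also have "\<dots> \<le> w * E * (C * \<gamma> k powr (2 * \<alpha>) * \<gamma> k powr (2 * \<beta>))"
    using c w by (intro mult_left_mono) (auto simp: E_def powr_add distrib_left mult.assoc)
  also have "\<dots> = C * w * \<gamma> k powr (2 * \<beta>) * (E * \<gamma> k powr (2 * \<alpha>))"
    by (simp add: algebra_simps)
  also have "\<dots> \<le> C * w * \<gamma> k powr (2 * \<beta>)
                    * (exp (- 2 * \<alpha>) * (\<alpha> / t) powr (2 * \<alpha>) * w powr (2 * \<alpha>))"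
    unfolding E_def using exp_decay_mult_powr_le[OF w \<gamma> t \<alpha>] C w
    by (intro mult_left_mono) auto
  also have "\<dots> = C * exp (- 2 * \<alpha>) * (\<alpha> / t) powr (2 * \<alpha>)
                    * (w powr (2 * \<alpha> + 1) * \<gamma> k powr (2 * \<beta>))"
    using w by (simp add: powr_add algebra_simps)
  finally show ?thesis by (simp add: w_def)
qed

lemma summable_on_infsum_le_cmult:
  fixes f h :: "'a \<Rightarrow> real"
  assumes "h summable_on A" and "\<And>x. x \<in> A \<Longrightarrow> 0 \<le> f x" and "\<And>x. x \<in> A \<Longrightarrow> f x \<le> K * h x"
  shows "f summable_on A \<and> infsum f A \<le> K * infsum h A"
proof -
  have Kh: "(\<lambda>x. K * h x) summable_on A"
    using assms(1) by (rule summable_on_cmult_right)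
  then have f: "f summable_on A"
    by (rule summable_on_comparison_test) (use assms(2,3) in auto)
  have "infsum f A \<le> infsum (\<lambda>x. K * h x) A"
    using f Kh assms(3) by (rule infsum_mono)
  with f show ?thesis by (simp add: infsum_cmult_right')
qed

theorem mainTheorem6:
  fixes L \<alpha> \<beta> C :: real and \<gamma> :: "int \<Rightarrow> real" and c :: "int \<Rightarrow> complex"
  assumes L_pos: "L > 0"
    and \<gamma>_pos: "\<And>k. \<gamma> k > 0"
    and u0_L2: "(\<lambda>k. (cmod (c k))\<^sup>2) summable_on UNIV"
    and \<alpha>_pos: "\<alpha> > 0" and \<beta>_pos: "\<beta> > 0" and C_pos: "C > 0"
    and hyp_i: "\<And>k. (cmod (c k))\<^sup>2 \<le> C * \<gamma> k powr (2 * (\<alpha> + \<beta>))"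
    and hyp_ii: "(\<lambda>k. (1 + (freq L k)\<^sup>2) powr (2 * \<alpha> + 1) * \<gamma> k powr (2 * \<beta>)) summable_on UNIV"
  shows "\<forall>t > 0.
     (\<lambda>k. (1 + (freq L k)\<^sup>2) * (cmod (sol_coeff L \<gamma> c t k))\<^sup>2) summable_on UNIV \<and>
     H1_norm_sq L (sol_coeff L \<gamma> c t)
       \<le> C * exp (- 2 * \<alpha>) * (\<alpha> / t) powr (2 * \<alpha>)
          * (\<Sum>\<^sub>\<infinity>k. (1 + (freq L k)\<^sup>2) powr (2 * \<alpha> + 1) * \<gamma> k powr (2 * \<beta>))"
  unfolding H1_norm_sq_def
proof (intro allI impI summable_on_infsum_le_cmult[OF hyp_ii])
  fix t :: real and k :: int
  assume t: "t > 0"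
  show "0 \<le> (1 + (freq L k)\<^sup>2) * (cmod (sol_coeff L \<gamma> c t k))\<^sup>2"
    by (simp add: add_nonneg_nonneg)
  show "(1 + (freq L k)\<^sup>2) * (cmod (sol_coeff L \<gamma> c t k))\<^sup>2
          \<le> C * exp (- 2 * \<alpha>) * (\<alpha> / t) powr (2 * \<alpha>)
            * ((1 + (freq L k)\<^sup>2) powr (2 * \<alpha> + 1) * \<gamma> k powr (2 * \<beta>))"
    using \<gamma>_pos t \<alpha>_pos C_pos hyp_i by (rule H1_weight_sol_coeff_le)
qed

end
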